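(* Assume the setting described in the context, assume that $\mu$ is absolutely continuous with respect to $\lambda$, and let $\theta\in\mathbb{R}^{\mathfrak{d}}$, $i\in\{1,\dots,H\}$ satisfy $|\mathfrak{b}^\theta_i|+\sum_{j=1}^d|\mathfrak{w}^\theta_{i,j}|>0$. Then for every $j\in\{1,\dots,d\}$ the function $\mathbb{R}^{\mathfrak{d}}\ni\vartheta\mapsto\mathcal{G}_{(i-1)d+j}(\vartheta)\in\mathbb{R}$ is continuous at $\theta$, and the function $\mathbb{R}^{\mathfrak{d}}\ni\vartheta\mapsto\mathcal{G}_{Hd+i}(\vartheta)\in\mathbb{R}$ is continuous at $\theta$.
   Context: Setting: $d,H,\mathfrak{d}\in\mathbb{N}$ with $\mathfrak{d}=dH+2H+1$, $\mathscr{a}\in\mathbb{R}$, $\mathscr{b}\in(\mathscr{a},\infty)$, $f\in C([\mathscr{a},\mathscr{b}]^d,\mathbb{R})$. For $\theta=(\theta_1,\dots,\theta_{\mathfrak{d}})\in\mathbb{R}^{\mathfrak{d}}$, $i\in\{1,\dots,H\}$, $j\in\{1,\dots,d\}$ put $\mathfrak{w}^\theta_{i,j}=\theta_{(i-1)d+j}$, $\mathfrak{b}^\theta_i=\theta_{Hd+i}$, $\mathfrak{v}^\theta_i=\theta_{H(d+1)+i}$, $\mathfrak{c}^\theta=\theta_{\mathfrak{d}}$. Let $\mathfrak{R}_r\in C^1(\mathbb{R},\mathbb{R})$, $r\in\mathbb{N}$, satisfy for all $x\in\mathbb{R}$ that $\lim_{r\to\infty}\big(|\mathfrak{R}_r(x)-\max\{x,0\}|+|(\mathfrak{R}_r)'(x)-\mathbb{1}_{(0,\infty)}(x)|\big)=0$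 and $\sup_{r\in\mathbb{N}}\sup_{y\in[-|x|,|x|]}|(\mathfrak{R}_r)'(y)|<\infty$. Let $\mu$ be a finite measure on $\mathcal{B}([\mathscr{a},\mathscr{b}]^d)$ and $\lambda$ the Lebesgue–Borel measure on $[\mathscr{a},\mathscr{b}]^d$. For $r\in\mathbb{N}$, $\theta\in\mathbb{R}^{\mathfrak{d}}$ let $\mathfrak{L}_r(\theta)=\int_{[\mathscr{a},\mathscr{b}]^d}\big(f(y)-\mathfrak{c}^\theta-\sum_{i=1}^H\mathfrak{v}^\theta_i\,\mathfrak{R}_r(\mathfrak{b}^\theta_i+\sum_{j=1}^d\mathfrak{w}^\theta_{i,j}y_j)\big)^2\,\mu(\mathrm{d}y)$, and let $\mathcal{G}=(\mathcal{G}_1,\dots,\mathcal{G}_{\mathfrak{d}})\colon\mathbb{R}^{\mathfrak{d}}\to\mathbb{R}^{\mathfrak{d}}$ satisfy $\mathcal{G}(\theta)=\lim_{r\to\infty}(\nabla\mathfrak{L}_r)(\theta)$ for every $\theta$ for which this limit exists. *)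

theory Defs
  imports "HOL-Analysis.Analysis"
begin

text \<open>Parameter vectors in R^dd are modelled as extensional functions nat => real
  supported on the index set {1..dd}; points of [a,b]^d likewise on {1..d}.\<close>

definition param_space :: "nat \<Rightarrow> (nat \<Rightarrow> real) set" where
  "param_space dd = {\<theta>. \<forall>k. k \<notin> {1..dd} \<longrightarrow> \<theta> k = 0}"

definition cube :: "nat \<Rightarrow> real \<Rightarrow> real \<Rightarrow> (nat \<Rightarrow> real) set" where
  "cube d a b = PiE {1..d} (\<lambda>_. {a..b})"

definition leb_cube :: "nat \<Rightarrow> real \<Rightarrow> real \<Rightarrow> (nat \<Rightarrow> real) measure" where
  "leb_cube d a b = restrict_space (PiM {1..d} (\<lambda>_. lborel)) (cube d a b)"

definition wgt :: "nat \<Rightarrow> (nat \<Rightarrow> real) \<Rightarrow> nat \<Rightarrow> nat \<Rightarrow> real" where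
  "wgt d \<theta> i j = \<theta> ((i - 1) * d + j)"

definition bias :: "nat \<Rightarrow> nat \<Rightarrow> (nat \<Rightarrow> real) \<Rightarrow> nat \<Rightarrow> real" where
  "bias d H \<theta> i = \<theta> (H * d + i)"

definition outw :: "nat \<Rightarrow> nat \<Rightarrow> (nat \<Rightarrow> real) \<Rightarrow> nat \<Rightarrow> real" where
  "outw d H \<theta> i = \<theta> (H * (d + 1) + i)"

definition outb :: "nat \<Rightarrow> nat \<Rightarrow> (nat \<Rightarrow> real) \<Rightarrow> real" where
  "outb d H \<theta> = \<theta> (d * H + 2 * H + 1)"

definition risk :: "nat \<Rightarrow> nat \<Rightarrow> ((nat \<Rightarrow> real) \<Rightarrow> real) \<Rightarrow> (nat \<Rightarrow> real) measure
    \<Rightarrow> (real \<Rightarrow> real) \<Rightarrow> (nat \<Rightarrow> real) \<Rightarrow> real" where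
  "risk d H f \<mu> Rr \<theta> = integral\<^sup>L \<mu> (\<lambda>y. (f y - outb d H \<theta>
      - (\<Sum>i=1..H. outw d H \<theta> i * Rr (bias d H \<theta> i + (\<Sum>j=1..d. wgt d \<theta> i j * y j))))\<^sup>2)"

definition partial :: "((nat \<Rightarrow> real) \<Rightarrow> real) \<Rightarrow> (nat \<Rightarrow> real) \<Rightarrow> nat \<Rightarrow> real" where
  "partial F \<theta> k = deriv (\<lambda>t. F (\<theta>(k := \<theta> k + t))) 0"

end

(*
  Differentiating under the integral sign and letting r tend to infinity by dominated convergence
  (R_r and R_r' are bounded on compacts uniformly in r) identifies G(phi)_k, for every parameter
  vector phi, with the integral over y of  2 (N(phi,y) - f y) * dN/dphi_k (phi,y),  where N is the
  ReLU network and the derivative of max(x,0) is read as the indicator of x > 0.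

  In phi this integrand is continuous except through the indicators of z_l(phi,y) > 0, where z_l is
  the input of hidden neuron l, and each such indicator is multiplied by dz_l/dphi_k. For a weight
  or the bias of neuron i this factor vanishes unless l = i, and by nondegeneracy z_i(theta,.) is
  either a nonzero constant or a nonconstant affine function, whose zero set is a hyperplane, hence
  Lebesgue-null and so mu-null. Off that set the integrand converges along every sequence
  phi_n -> theta, and dominated convergence gives continuity of G at theta.
*)

theory Submission
  imports Defs
begin

section \<open>Differentiation under the integral sign\<close>

lemma integral_dominated_convergence_eventually:
  fixes s :: "nat \<Rightarrow> 'a \<Rightarrow> real"
  assumes "f \<in> borel_measurable M" "integrable M w"
    and "AE x in M. (\<lambda>n. s n x) \<longlonglongrightarrow> f x"
    and "\<forall>\<^sub>F n in sequentially. s n \<in> borel_measurable M \<and> (AE x in M. \<bar>s n x\<bar> \<le> w x)"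
  shows "(\<lambda>n. integral\<^sup>L M (s n)) \<longlonglongrightarrow> integral\<^sup>L M f"
proof -
  from assms(4) obtain N
    where N: "\<And>n. N \<le> n \<Longrightarrow> s n \<in> borel_measurable M \<and> (AE x in M. \<bar>s n x\<bar> \<le> w x)"
    by (auto simp: eventually_sequentially)
  show ?thesis
  proof (rule LIMSEQ_offset[where k=N], rule integral_dominated_convergence)
    show "AE x in M. norm (s (n + N) x) \<le> w x" "s (n + N) \<in> borel_measurable M" for n
      using N[of "n + N"] by auto
    show "AE x in M. (\<lambda>n. s (n + N) x) \<longlonglongrightarrow> f x"
      using assms(3) by eventually_elim (rule LIMSEQ_ignore_initial_segment)
  qed (use assms in auto)
qed

lemma abs_difference_quotient_le:
  fixes g g' :: "real \<Rightarrow> real"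
  assumes "\<And>t. t \<in> {-1..1} \<Longrightarrow> (g has_real_derivative g' t) (at t)"
    and "\<And>t. t \<in> {-1..1} \<Longrightarrow> \<bar>g' t\<bar> \<le> B" and "h \<in> {-1..1}"
  shows "\<bar>(g h - g 0) / h\<bar> \<le> B"
proof -
  have "norm (g h - g 0) \<le> B * norm (h - 0)"
    using assms by (intro field_differentiable_bound[where S="{-1..1}" and f'=g'])
      (auto intro: has_field_derivative_at_within)
  moreover have "0 \<le> B"
    using assms(2)[of 0] by (auto intro: order_trans[OF abs_ge_zero])
  ultimately show ?thesis
    by (cases "h = 0") (simp_all add: abs_divide divide_le_eq)
qed

lemma has_real_derivative_integral:
  fixes F F' :: "real \<Rightarrow> 'a \<Rightarrow> real"
  assumes integrable: "\<And>t. t \<in> {-1..1} \<Longrightarrow> integrable M (F t)"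
    and measurable': "F' 0 \<in> borel_measurable M"
    and deriv: "\<And>y t. y \<in> space M \<Longrightarrow> t \<in> {-1..1} \<Longrightarrow>
      ((\<lambda>s. F s y) has_real_derivative F' t y) (at t)"
    and bound: "\<And>y t. y \<in> space M \<Longrightarrow> t \<in> {-1..1} \<Longrightarrow> \<bar>F' t y\<bar> \<le> w y"
    and integrable_bound: "integrable M w"
  shows "((\<lambda>t. \<integral>y. F t y \<partial>M) has_real_derivative (\<integral>y. F' 0 y \<partial>M)) (at 0)"
  unfolding has_field_derivative_iff
proof (subst LIMSEQ_SEQ_conv[symmetric], intro allI impI, elim conjE)
  fix X :: "nat \<Rightarrow> real" assume X_nonzero: "\<forall>n. X n \<noteq> 0" and X: "X \<longlonglongrightarrow> 0"
  define q where "q h = (\<lambda>y. (F h y - F 0 y) / h)" for h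
  have X_small: "\<forall>\<^sub>F n in sequentially. X n \<in> {-1..1}"
    using tendstoD[OF X zero_less_one] by eventually_elim (auto simp: dist_real_def)
  have "(\<lambda>n. integral\<^sup>L M (q (X n))) \<longlonglongrightarrow> (\<integral>y. F' 0 y \<partial>M)"
  proof (rule integral_dominated_convergence_eventually[OF measurable' integrable_bound])
    show "AE y in M. (\<lambda>n. q (X n) y) \<longlonglongrightarrow> F' 0 y"
    proof (rule AE_I2)
      fix y assume y: "y \<in> space M"
      have "((\<lambda>h. (F h y - F 0 y) / (h - 0)) \<longlongrightarrow> F' 0 y) (at 0)"
        using deriv[OF y, of 0] unfolding has_field_derivative_iff by simp
      moreover have "filterlim X (at 0) sequentially"
        using X X_nonzero by (intro filterlim_atI) auto
      ultimately show "(\<lambda>n. q (X n) y) \<longlonglongrightarrow> F' 0 y"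
        unfolding q_def using filterlim_compose by fastforce
    qed
    show "\<forall>\<^sub>F n in sequentially. q (X n) \<in> borel_measurable M \<and> (AE y in M. \<bar>q (X n) y\<bar> \<le> w y)"
      using X_small
    proof eventually_elim
      case (elim n)
      have "q (X n) \<in> borel_measurable M"
        unfolding q_def using integrable[OF elim] integrable[of 0] by measurable
      moreover have "\<bar>q (X n) y\<bar> \<le> w y" if "y \<in> space M" for y
        unfolding q_def using deriv[OF that] bound[OF that] elim by (rule abs_difference_quotient_le)
      ultimately show ?case by auto
    qed
  qed
  moreover have "\<forall>\<^sub>F n in sequentially.
      integral\<^sup>L M (q (X n)) = ((\<integral>y. F (X n) y \<partial>M) - (\<integral>y. F 0 y \<partial>M)) / (X n - 0)"
    using X_small
  proof eventually_elim
    case (elim n)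
    then show ?case
      using integrable[OF elim] integrable[of 0] by (simp add: q_def integral_diff)
  qed
  ultimately show "(\<lambda>n. ((\<integral>y. F (X n) y \<partial>M) - (\<integral>y. F 0 y \<partial>M)) / (X n - 0))
      \<longlonglongrightarrow> (\<integral>y. F' 0 y \<partial>M)"
    using Lim_transform_eventually by fastforce
qed

section \<open>Shallow networks and their parameter derivatives\<close>

definition neuron_input :: "nat \<Rightarrow> nat \<Rightarrow> (nat \<Rightarrow> real) \<Rightarrow> nat \<Rightarrow> (nat \<Rightarrow> real) \<Rightarrow> real" where
  "neuron_input d H \<phi> l y = bias d H \<phi> l + (\<Sum>j=1..d. wgt d \<phi> l j * y j)"

definition realization ::
    "nat \<Rightarrow> nat \<Rightarrow> (real \<Rightarrow> real) \<Rightarrow> (nat \<Rightarrow> real) \<Rightarrow> (nat \<Rightarrow> real) \<Rightarrow> real" where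
  "realization d H \<rho> \<phi> y = outb d H \<phi> + (\<Sum>l=1..H. outw d H \<phi> l * \<rho> (neuron_input d H \<phi> l y))"

text \<open>Here \<open>\<rho>'\<close> stands for the derivative of \<open>\<rho>\<close>. Since \<open>outb\<close>, \<open>outw\<close> and \<open>neuron_input\<close> are
  linear in the parameters, their derivatives in the direction of \<open>\<phi> k\<close> are their values at the
  unit vector \<open>indicator {k}\<close>.\<close>
definition realization_partial :: "nat \<Rightarrow> nat \<Rightarrow> (real \<Rightarrow> real) \<Rightarrow> (real \<Rightarrow> real)
    \<Rightarrow> (nat \<Rightarrow> real) \<Rightarrow> nat \<Rightarrow> (nat \<Rightarrow> real) \<Rightarrow> real" where
  "realization_partial d H \<rho> \<rho>' \<phi> k y = outb d H (indicator {k}) +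
     (\<Sum>l=1..H. outw d H (indicator {k}) l * \<rho> (neuron_input d H \<phi> l y)
        + outw d H \<phi> l * \<rho>' (neuron_input d H \<phi> l y) * neuron_input d H (indicator {k}) l y)"

definition risk_gradient_integrand :: "nat \<Rightarrow> nat \<Rightarrow> ((nat \<Rightarrow> real) \<Rightarrow> real) \<Rightarrow> (real \<Rightarrow> real)
    \<Rightarrow> (real \<Rightarrow> real) \<Rightarrow> (nat \<Rightarrow> real) \<Rightarrow> nat \<Rightarrow> (nat \<Rightarrow> real) \<Rightarrow> real" where
  "risk_gradient_integrand d H f \<rho> \<rho>' \<phi> k y =
     2 * (realization d H \<rho> \<phi> y - f y) * realization_partial d H \<rho> \<rho>' \<phi> k y"

lemma risk_eq_integral_realization:
  "risk d H f \<mu> \<rho> \<phi> = (\<integral>y. (f y - realization d H \<rho> \<phi> y)\<^sup>2 \<partial>\<mu>)"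
  unfolding risk_def realization_def neuron_input_def by (simp add: diff_diff_eq)

lemma fun_upd_add_eq_indicator:
  fixes \<phi> :: "nat \<Rightarrow> real"
  shows "\<phi>(k := \<phi> k + t) = (\<lambda>m. \<phi> m + t * indicator {k} m)"
  by (rule ext) (simp add: indicator_def)

lemma neuron_input_add_scaled:
  "neuron_input d H (\<lambda>m. \<phi> m + t * \<psi> m) l y = neuron_input d H \<phi> l y + t * neuron_input d H \<psi> l y"
  unfolding neuron_input_def bias_def wgt_def
  by (simp add: algebra_simps sum.distrib sum_distrib_left)

lemma has_real_derivative_realization:
  assumes "\<And>x. (\<rho> has_real_derivative \<rho>' x) (at x)"
  shows "((\<lambda>t. realization d H \<rho> (\<phi>(k := \<phi> k + t)) y) has_real_derivative
      realization_partial d H \<rho> \<rho>' (\<phi>(k := \<phi> k + t0)) k y) (at t0)"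
proof -
  have chain: "((\<lambda>t. \<rho> (g t)) has_real_derivative \<rho>' (g t) * D) (at t)"
    if "(g has_real_derivative D) (at t)" for g D t
    using DERIV_chain2[OF assms that] .
  show ?thesis
    unfolding realization_def realization_partial_def fun_upd_add_eq_indicator neuron_input_add_scaled
    unfolding outb_def outw_def
    by (rule derivative_eq_intros chain refl | simp add: algebra_simps)+
qed

lemma abs_sum_atLeastAtMost_le:
  fixes g :: "nat \<Rightarrow> real"
  assumes "\<And>j. j \<in> {1..n} \<Longrightarrow> \<bar>g j\<bar> \<le> K"
  shows "\<bar>\<Sum>j=1..n. g j\<bar> \<le> real n * K"
proof -
  have "\<bar>\<Sum>j=1..n. g j\<bar> \<le> (\<Sum>j=1..n. \<bar>g j\<bar>)"
    by (rule sum_abs)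
  also have "\<dots> \<le> real (card {1..n}) * K"
    using assms by (rule sum_bounded_above)
  finally show ?thesis by simp
qed

lemma abs_mult_le_mult:
  fixes x y :: real
  assumes "\<bar>x\<bar> \<le> A" "\<bar>y\<bar> \<le> B"
  shows "\<bar>x * y\<bar> \<le> A * B"
  unfolding abs_mult using assms by (intro mult_mono) auto

lemma abs_neuron_input_le:
  assumes "\<And>m. \<bar>\<phi> m\<bar> \<le> P" and "\<And>j. j \<in> {1..d} \<Longrightarrow> \<bar>y j\<bar> \<le> Y"
  shows "\<bar>neuron_input d H \<phi> l y\<bar> \<le> P + real d * (P * Y)"
proof -
  have "\<bar>\<Sum>j=1..d. wgt d \<phi> l j * y j\<bar> \<le> real d * (P * Y)"
    using assms by (intro abs_sum_atLeastAtMost_le abs_mult_le_mult) (auto simp: wgt_def)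
  moreover have "\<bar>bias d H \<phi> l\<bar> \<le> P"
    using assms by (simp add: bias_def)
  ultimately show ?thesis
    unfolding neuron_input_def by linarith
qed

lemma abs_neuron_input_indicator_le:
  assumes "\<And>j. j \<in> {1..d} \<Longrightarrow> \<bar>y j\<bar> \<le> Y"
  shows "\<bar>neuron_input d H (indicator {k}) l y\<bar> \<le> 1 + real d * Y"
  using abs_neuron_input_le[of "indicator {k}" 1, OF _ assms] by (simp add: indicator_def)

lemma abs_realization_le:
  assumes "\<And>m. \<bar>\<phi> m\<bar> \<le> P" and "\<And>j. j \<in> {1..d} \<Longrightarrow> \<bar>y j\<bar> \<le> Y"
    and "\<And>x. \<bar>x\<bar> \<le> P + real d * (P * Y) \<Longrightarrow> \<bar>\<rho> x\<bar> \<le> A"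
  shows "\<bar>realization d H \<rho> \<phi> y\<bar> \<le> P + real H * (P * A)"
proof -
  have "\<bar>\<Sum>l=1..H. outw d H \<phi> l * \<rho> (neuron_input d H \<phi> l y)\<bar> \<le> real H * (P * A)"
    using assms abs_neuron_input_le[OF assms(1,2)]
    by (intro abs_sum_atLeastAtMost_le abs_mult_le_mult) (auto simp: outw_def)
  moreover have "\<bar>outb d H \<phi>\<bar> \<le> P"
    using assms by (simp add: outb_def)
  ultimately show ?thesis
    unfolding realization_def by linarith
qed

lemma abs_realization_partial_le:
  assumes "\<And>m. \<bar>\<phi> m\<bar> \<le> P" and "\<And>j. j \<in> {1..d} \<Longrightarrow> \<bar>y j\<bar> \<le> Y"
    and "\<And>x. \<bar>x\<bar> \<le> P + real d * (P * Y) \<Longrightarrow> \<bar>\<rho> x\<bar> \<le> A"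
    and "\<And>x. \<bar>x\<bar> \<le> P + real d * (P * Y) \<Longrightarrow> \<bar>\<rho>' x\<bar> \<le> A'"
  shows "\<bar>realization_partial d H \<rho> \<rho>' \<phi> k y\<bar> \<le> 1 + real H * (A + P * A' * (1 + real d * Y))"
proof -
  have "\<bar>outw d H (indicator {k}) l * \<rho> (neuron_input d H \<phi> l y)\<bar> \<le> 1 * A" for l
    using assms abs_neuron_input_le[OF assms(1,2)]
    by (intro abs_mult_le_mult) (auto simp: outw_def indicator_def)
  moreover have "\<bar>outw d H \<phi> l * \<rho>' (neuron_input d H \<phi> l y) * neuron_input d H (indicator {k}) l y\<bar>
      \<le> P * A' * (1 + real d * Y)" for l
    using assms abs_neuron_input_le[OF assms(1,2)] abs_neuron_input_indicator_le[OF assms(2)]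
    by (intro abs_mult_le_mult) (auto simp: outw_def)
  ultimately have "\<bar>\<Sum>l=1..H. outw d H (indicator {k}) l * \<rho> (neuron_input d H \<phi> l y)
      + outw d H \<phi> l * \<rho>' (neuron_input d H \<phi> l y) * neuron_input d H (indicator {k}) l y\<bar>
      \<le> real H * (A + P * A' * (1 + real d * Y))"
    by (intro abs_sum_atLeastAtMost_le order_trans[OF abs_triangle_ineq] add_mono) simp_all
  moreover have "\<bar>outb d H (indicator {k})\<bar> \<le> 1"
    by (simp add: outb_def indicator_def)
  ultimately show ?thesis
    unfolding realization_partial_def by linarith
qed

lemma abs_risk_gradient_integrand_le:
  assumes "\<And>m. \<bar>\<phi> m\<bar> \<le> P" and "\<And>j. j \<in> {1..d} \<Longrightarrow> \<bar>y j\<bar> \<le> Y" and "\<bar>f y\<bar> \<le> F"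
    and "\<And>x. \<bar>x\<bar> \<le> P + real d * (P * Y) \<Longrightarrow> \<bar>\<rho> x\<bar> \<le> A"
    and "\<And>x. \<bar>x\<bar> \<le> P + real d * (P * Y) \<Longrightarrow> \<bar>\<rho>' x\<bar> \<le> A'"
  shows "\<bar>risk_gradient_integrand d H f \<rho> \<rho>' \<phi> k y\<bar>
    \<le> 2 * (P + real H * (P * A) + F) * (1 + real H * (A + P * A' * (1 + real d * Y)))"
proof -
  have "\<bar>realization d H \<rho> \<phi> y\<bar> \<le> P + real H * (P * A)"
    using assms(1,2,4) by (rule abs_realization_le)
  then have "\<bar>2 * (realization d H \<rho> \<phi> y - f y)\<bar> \<le> 2 * (P + real H * (P * A) + F)"
    using assms(3) by (simp add: abs_le_iff)
  moreover have "\<bar>realization_partial d H \<rho> \<rho>' \<phi> k y\<bar> \<le> 1 + real H * (A + P * A' * (1 + real d * Y))"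
    using assms(1,2,4,5) by (rule abs_realization_partial_le)
  ultimately show ?thesis
    unfolding risk_gradient_integrand_def by (rule abs_mult_le_mult)
qed

lemma tendsto_risk_gradient_integrand_activation:
  assumes "\<And>x. ((\<lambda>r. \<rho>s r x) \<longlongrightarrow> \<rho> x) F" and "\<And>x. ((\<lambda>r. \<rho>s' r x) \<longlongrightarrow> \<rho>' x) F"
  shows "((\<lambda>r. risk_gradient_integrand d H f (\<rho>s r) (\<rho>s' r) \<phi> k y) \<longlongrightarrow>
    risk_gradient_integrand d H f \<rho> \<rho>' \<phi> k y) F"
  unfolding risk_gradient_integrand_def realization_def realization_partial_def
  by (intro tendsto_intros assms)

lemma tendsto_neuron_input:
  assumes "\<And>m. ((\<lambda>n. u n m) \<longlongrightarrow> \<theta> m) F"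
  shows "((\<lambda>n. neuron_input d H (u n) l y) \<longlongrightarrow> neuron_input d H \<theta> l y) F"
  unfolding neuron_input_def bias_def wgt_def by (intro tendsto_intros assms)

lemma tendsto_risk_gradient_integrand_relu:
  assumes lim: "\<And>m. ((\<lambda>n. u n m) \<longlongrightarrow> \<theta> m) F"
    and nonzero: "\<forall>l\<in>{1..H}. neuron_input d H (indicator {k}) l y \<noteq> 0 \<longrightarrow> neuron_input d H \<theta> l y \<noteq> 0"
  shows "((\<lambda>n. risk_gradient_integrand d H f (\<lambda>x. max x 0) (indicator {0<..}) (u n) k y) \<longlongrightarrow>
    risk_gradient_integrand d H f (\<lambda>x. max x 0) (indicator {0<..}) \<theta> k y) F"
proof -
  let ?z = "\<lambda>\<phi> l. neuron_input d H \<phi> l y"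
  have relu: "((\<lambda>n. max (?z (u n) l) 0) \<longlongrightarrow> max (?z \<theta> l) 0) F" for l
    by (intro tendsto_max tendsto_const tendsto_neuron_input lim)
  \<comment> \<open>The indicator jumps only at \<open>0\<close>, which \<open>nonzero\<close> excludes wherever the factor is nonzero.\<close>
  have step: "((\<lambda>n. indicator {0<..} (?z (u n) l) * ?z (indicator {k}) l :: real)
      \<longlongrightarrow> indicator {0<..} (?z \<theta> l) * ?z (indicator {k}) l) F"
    if "l \<in> {1..H}" for l
  proof (cases "?z (indicator {k}) l = 0")
    case False
    then have "isCont (indicator {0<..} :: real \<Rightarrow> real) (?z \<theta> l)"
      using nonzero that by (simp add: isCont_indicator)
    then show ?thesis
      by (intro tendsto_mult_right isCont_tendsto_compose[OF _ tendsto_neuron_input[OF lim]])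
  qed simp
  have "((\<lambda>n. realization d H (\<lambda>x. max x 0) (u n) y) \<longlongrightarrow> realization d H (\<lambda>x. max x 0) \<theta> y) F"
    unfolding realization_def outb_def outw_def by (intro tendsto_intros lim relu)
  moreover have "((\<lambda>n. realization_partial d H (\<lambda>x. max x 0) (indicator {0<..}) (u n) k y) \<longlongrightarrow>
      realization_partial d H (\<lambda>x. max x 0) (indicator {0<..}) \<theta> k y) F"
    unfolding realization_partial_def outw_def mult.assoc
    by (intro tendsto_add tendsto_const tendsto_sum tendsto_mult_left tendsto_mult lim relu step)
  ultimately show ?thesis
    unfolding risk_gradient_integrand_def by (intro tendsto_intros)
qed

lemma mult_add_eq_mult_add_imp_eq:
  fixes p q j j' d :: nat
  assumes "j < d" "j' < d" "p * d + j = q * d + j'"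
  shows "p = q"
proof -
  have "(p * d + j) div d = p" "(q * d + j') div d = q"
    using assms(1,2) by simp_all
  then show ?thesis
    using assms(3) by simp
qed

lemma weight_index_le:
  fixes i j d H :: nat
  assumes "i \<in> {1..H}" "j \<le> d"
  shows "(i - 1) * d + j \<le> H * d"
proof -
  have "(i - 1) * d + j \<le> i * d"
    using assms by (cases i) auto
  also have "\<dots> \<le> H * d"
    using assms by simp
  finally show ?thesis .
qed

lemma weight_index_mem:
  fixes i j d H :: nat
  assumes "i \<in> {1..H}" "j \<in> {1..d}"
  shows "(i - 1) * d + j \<in> {1..d * H + 2 * H + 1}"
  using weight_index_le[OF assms(1), of j d] assms(2) by (auto simp: mult.commute)

lemma bias_index_mem:
  fixes i d H :: nat
  assumes "i \<in> {1..H}"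
  shows "H * d + i \<in> {1..d * H + 2 * H + 1}"
  using assms by (auto simp: mult.commute)

lemma neuron_input_indicator_weight_other:
  assumes "i \<in> {1..H}" "l \<in> {1..H}" "l \<noteq> i" "j \<in> {1..d}"
  shows "neuron_input d H (indicator {(i - 1) * d + j}) l y = 0"
proof -
  have "(i - 1) * d + j \<le> H * d" "1 \<le> l" "1 \<le> j" "j \<le> d"
    using weight_index_le[OF assms(1)] assms(2,4) by auto
  then have "H * d + l \<noteq> (i - 1) * d + j"
    by linarith
  moreover have "(l - 1) * d + j' \<noteq> (i - 1) * d + j" if "j' \<in> {1..d}" for j'
  proof
    assume "(l - 1) * d + j' = (i - 1) * d + j"
    then have "(l - 1) * d + (j' - 1) = (i - 1) * d + (j - 1)"
      using that \<open>1 \<le> j\<close> by simp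
    moreover have "j' - 1 < d" "j - 1 < d"
      using that \<open>1 \<le> j\<close> \<open>j \<le> d\<close> by auto
    ultimately have "l - 1 = i - 1"
      using mult_add_eq_mult_add_imp_eq by blast
    moreover have "1 \<le> i"
      using assms(1) by simp
    ultimately show False
      using \<open>1 \<le> l\<close> assms(3) by arith
  qed
  ultimately show ?thesis
    unfolding neuron_input_def bias_def wgt_def by simp
qed

lemma neuron_input_indicator_bias_other:
  assumes "l \<in> {1..H}" "l \<noteq> i" "i \<ge> 1"
  shows "neuron_input d H (indicator {H * d + i}) l y = 0"
proof -
  have "(l - 1) * d + j \<noteq> H * d + i" if "j \<in> {1..d}" for j
    using weight_index_le[OF assms(1), of j d] assms(3) that by simp
  then show ?thesis
    unfolding neuron_input_def bias_def wgt_def using assms(2) by simp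
qed

section \<open>Lebesgue measure on the cube\<close>

lemma space_leb_cube: "space (leb_cube d a b) = cube d a b"
  unfolding leb_cube_def cube_def by (auto simp: space_restrict_space space_PiM PiE_iff)

lemma cube_in_sets_PiM: "cube d a b \<in> sets (PiM {1..d} (\<lambda>_. lborel :: real measure))"
  unfolding cube_def by (rule sets_PiM_I_finite) auto

lemma borel_measurable_component_PiM:
  "(\<lambda>y. y j) \<in> borel_measurable (PiM I (\<lambda>_. lborel :: real measure))"
proof (cases "j \<in> I")
  case True
  then show ?thesis
    using measurable_component_singleton[OF True, of "\<lambda>_. lborel"] by simp
next
  case False
  have "y j = undefined" if "y \<in> space (PiM I (\<lambda>_. lborel :: real measure))" for y
    using that False unfolding space_PiM by (rule PiE_arb)
  then have "(\<lambda>y. y j) \<in> borel_measurable (PiM I (\<lambda>_. lborel :: real measure))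
      \<longleftrightarrow> (\<lambda>_. undefined :: real) \<in> borel_measurable (PiM I (\<lambda>_. lborel :: real measure))"
    by (rule measurable_cong)
  then show ?thesis
    by simp
qed

lemma borel_measurable_component_leb_cube: "(\<lambda>y. y j) \<in> borel_measurable (leb_cube d a b)"
  unfolding leb_cube_def by (rule measurable_restrict_space1[OF borel_measurable_component_PiM])

lemma borel_measurable_continuous_on_cube:
  assumes "continuous_on (cube d a b) f"
  shows "f \<in> borel_measurable (leb_cube d a b)"
proof -
  have "(\<lambda>y. y) \<in> borel_measurable (PiM {1..d} (\<lambda>_. lborel :: real measure))"
    by (rule measurable_coordinatewise_then_product) (rule borel_measurable_component_PiM)
  then have "(\<lambda>y. y) \<in> measurable (leb_cube d a b) (restrict_space borel (cube d a b))"
    unfolding leb_cube_def by (rule measurable_restrict_space3) auto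
  moreover have "f \<in> borel_measurable (restrict_space borel (cube d a b))"
    by (rule borel_measurable_continuous_on_restrict[OF assms])
  ultimately show ?thesis
    using measurable_comp by fastforce
qed

lemma compact_cube: "compact (cube d a b)"
proof -
  define S where "S n = (if n \<in> {1..d} then {a..b} else {undefined})" for n :: nat
  have "cube d a b = PiE UNIV S"
  proof (rule set_eqI)
    show "x \<in> cube d a b \<longleftrightarrow> x \<in> PiE UNIV S" for x
      unfolding cube_def S_def by (auto simp: PiE_iff extensional_def)
  qed
  moreover have "compactin (product_topology (\<lambda>_. euclidean) UNIV) (PiE UNIV S)"
    unfolding compactin_PiE by (auto simp: S_def)
  ultimately show ?thesis
    by (simp add: euclidean_product_topology)
qed

lemma abs_component_le_of_mem_cube:
  assumes "y \<in> cube d a b" "j \<in> {1..d}"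
  shows "\<bar>y j\<bar> \<le> max \<bar>a\<bar> \<bar>b\<bar>"
proof -
  have "a \<le> y j" "y j \<le> b"
    using assms unfolding cube_def by (auto simp: PiE_iff)
  then show ?thesis by linarith
qed

lemma affine_hyperplane_in_null_sets_PiM:
  fixes w :: "'i \<Rightarrow> real"
  assumes "finite I" "j0 \<in> I" "w j0 \<noteq> 0"
  shows "{y \<in> space (PiM I (\<lambda>_. lborel)). c + (\<Sum>j\<in>I. w j * y j) = 0} \<in> null_sets (PiM I (\<lambda>_. lborel))"
    (is "?A \<in> null_sets ?P")
proof -
  interpret product_sigma_finite "\<lambda>_. lborel :: real measure"
    by unfold_locales
  define J where "J = I - {j0}"
  let ?Q = "PiM J (\<lambda>_. lborel :: real measure)"
  have I: "I = insert j0 J" "finite J" "j0 \<notin> J"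
    using assms(1,2) by (auto simp: J_def)
  have A_sets: "?A \<in> sets ?P"
    using borel_measurable_component_PiM by measurable
  have "emeasure ?P ?A = (\<integral>\<^sup>+ y. indicator ?A y \<partial>?P)"
    using A_sets by simp
  also have "\<dots> = (\<integral>\<^sup>+ x. (\<integral>\<^sup>+ s. indicator ?A (x(j0 := s)) \<partial>lborel) \<partial>?Q)"
    unfolding I(1) by (rule product_nn_integral_insert[OF I(2,3)]) (use A_sets I(1) in simp)
  also have "\<dots> = (\<integral>\<^sup>+ x. 0 \<partial>?Q)"
  proof (rule nn_integral_cong)
    fix x assume x: "x \<in> space ?Q"
    \<comment> \<open>Every line parallel to the \<open>j0\<close>-th axis meets the hyperplane in the single point \<open>s0\<close>.\<close>
    define s0 where "s0 = - (c + (\<Sum>j\<in>J. w j * x j)) / w j0"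
    have "indicator ?A (x(j0 := s)) = (indicator {s0} s :: ennreal)" for s
    proof -
      have "x(j0 := s) \<in> space ?P"
        using x unfolding I(1) by (auto simp: space_PiM PiE_iff extensional_def)
      moreover have "(\<Sum>j\<in>I. w j * (x(j0 := s)) j) = w j0 * s + (\<Sum>j\<in>J. w j * x j)"
        unfolding I(1) using I(2,3) by (simp add: sum.insert) (rule sum.cong, auto)
      ultimately show ?thesis
        using assms(3) by (auto simp: indicator_def s0_def field_simps)
    qed
    then show "(\<integral>\<^sup>+ s. indicator ?A (x(j0 := s)) \<partial>lborel) = 0"
      by simp
  qed
  finally show ?thesis
    using A_sets by (simp add: null_sets_def)
qed

lemma AE_neuron_input_nonzero:
  assumes sets: "sets \<mu> = sets (leb_cube d a b)"
    and ac: "absolutely_continuous (leb_cube d a b) \<mu>"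
    and nondeg: "\<bar>bias d H \<theta> i\<bar> + (\<Sum>j=1..d. \<bar>wgt d \<theta> i j\<bar>) > 0"
  shows "AE y in \<mu>. neuron_input d H \<theta> i y \<noteq> 0"
proof (cases "\<forall>j\<in>{1..d}. wgt d \<theta> i j = 0")
  case True
  then show ?thesis
    using nondeg by (intro AE_I2) (simp add: neuron_input_def)
next
  case False
  then obtain j0 where j0: "j0 \<in> {1..d}" "wgt d \<theta> i j0 \<noteq> 0"
    by blast
  let ?P = "PiM {1..d} (\<lambda>_. lborel :: real measure)"
  define N where "N = {y \<in> space ?P. bias d H \<theta> i + (\<Sum>j=1..d. wgt d \<theta> i j * y j) = 0}"
  have "N \<in> null_sets ?P"
    unfolding N_def using j0 by (intro affine_hyperplane_in_null_sets_PiM) auto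
  then have "N \<inter> cube d a b \<in> null_sets ?P"
    using cube_in_sets_PiM by (rule null_set_Int2)
  then have "N \<inter> cube d a b \<in> null_sets (leb_cube d a b)"
    unfolding leb_cube_def using null_sets_restrict_space[OF cube_in_sets_PiM] by auto
  then have null: "N \<inter> cube d a b \<in> null_sets \<mu>"
    using ac unfolding absolutely_continuous_def by auto
  have space: "space \<mu> = cube d a b"
    using sets_eq_imp_space_eq[OF sets] space_leb_cube by simp
  from AE_not_in[OF null] AE_space show ?thesis
  proof eventually_elim
    case (elim y)
    then have "y \<in> space ?P"
      unfolding space cube_def by (auto simp: space_PiM)
    then show ?case
      using elim unfolding N_def neuron_input_def space by auto
  qed
qed

section \<open>Smoothed risks and their limiting gradient\<close>

lemma abs_le_sum_of_mem_param_space: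
  assumes "\<phi> \<in> param_space dd"
  shows "\<bar>\<phi> m\<bar> \<le> (\<Sum>m'\<in>{1..dd}. \<bar>\<phi> m'\<bar>)"
proof (cases "m \<in> {1..dd}")
  case True
  then show ?thesis by (intro member_le_sum) auto
next
  case False
  then show ?thesis
    using assms by (simp add: param_space_def sum_nonneg)
qed

lemma param_space_convergent_uniformly_bounded:
  assumes "\<And>n. u n \<in> param_space dd" and "\<And>m. (\<lambda>n. u n m) \<longlonglongrightarrow> \<theta> m"
  obtains P where "\<And>n m. \<bar>u n m\<bar> \<le> P"
proof -
  have "\<exists>B. \<forall>n. \<bar>u n m\<bar> \<le> B" for m
    using convergent_imp_Bseq[of "\<lambda>n. u n m"] assms(2) by (auto simp: convergent_def Bseq_def)
  then obtain B where B: "\<And>m n. \<bar>u n m\<bar> \<le> B m"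
    by metis
  have "\<bar>u n m\<bar> \<le> (\<Sum>m'\<in>{1..dd}. \<bar>B m'\<bar>)" for n m
  proof (cases "m \<in> {1..dd}")
    case True
    then have "\<bar>B m\<bar> \<le> (\<Sum>m'\<in>{1..dd}. \<bar>B m'\<bar>)"
      by (intro member_le_sum) auto
    then show ?thesis
      using B[of n m] by linarith
  next
    case False
    then show ?thesis
      using assms(1)[of n] by (simp add: param_space_def sum_nonneg)
  qed
  then show ?thesis
    using that by blast
qed

definition relu_gradient ::
    "nat \<Rightarrow> nat \<Rightarrow> ((nat \<Rightarrow> real) \<Rightarrow> real) \<Rightarrow> (nat \<Rightarrow> real) measure \<Rightarrow> (nat \<Rightarrow> real) \<Rightarrow> nat \<Rightarrow> real" where
  "relu_gradient d H f \<mu> \<phi> k =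
     (\<integral>y. risk_gradient_integrand d H f (\<lambda>x. max x 0) (indicator {0<..}) \<phi> k y \<partial>\<mu>)"

locale smooth_relu_approximation =
  fixes R :: "nat \<Rightarrow> real \<Rightarrow> real"
  assumes R_C1: "\<forall>r\<ge>1. (\<forall>x. R r differentiable at x) \<and> continuous_on UNIV (deriv (R r))"
    and R_lim: "\<forall>x. (\<lambda>r. \<bar>R r x - max x 0\<bar> + \<bar>deriv (R r) x - indicator {0<..} x\<bar>) \<longlonglongrightarrow> 0"
    and R_bd: "\<forall>x. \<exists>C. \<forall>r\<ge>1. \<forall>y\<in>{-\<bar>x\<bar>..\<bar>x\<bar>}. \<bar>deriv (R r) y\<bar> \<le> C"
begin

lemma has_real_derivative_R: "r \<ge> 1 \<Longrightarrow> (R r has_real_derivative deriv (R r) x) (at x)"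
  using R_C1 DERIV_deriv_iff_real_differentiable by blast

lemma borel_measurable_R: "r \<ge> 1 \<Longrightarrow> R r \<in> borel_measurable borel"
  using has_real_derivative_R
  by (intro borel_measurable_continuous_onI continuous_at_imp_continuous_on) (meson DERIV_isCont)

lemma borel_measurable_deriv_R: "r \<ge> 1 \<Longrightarrow> deriv (R r) \<in> borel_measurable borel"
  using R_C1 by (intro borel_measurable_continuous_onI) auto

lemma tendsto_R: "(\<lambda>r. R r x) \<longlonglongrightarrow> max x 0"
proof -
  have "(\<lambda>r. \<bar>R r x - max x 0\<bar>) \<longlonglongrightarrow> 0"
    by (rule tendsto_sandwich[OF _ _ tendsto_const R_lim[rule_format, of x]]) auto
  then show ?thesis
    by (simp add: LIM_zero_iff tendsto_rabs_zero_iff)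
qed

lemma tendsto_deriv_R: "(\<lambda>r. deriv (R r) x) \<longlonglongrightarrow> indicator {0<..} x"
proof -
  have "(\<lambda>r. \<bar>deriv (R r) x - indicator {0<..} x\<bar>) \<longlonglongrightarrow> 0"
    by (rule tendsto_sandwich[OF _ _ tendsto_const R_lim[rule_format, of x]]) auto
  then show ?thesis
    by (simp add: LIM_zero_iff tendsto_rabs_zero_iff)
qed

lemma R_uniformly_bounded:
  obtains A A' where "\<And>r x. r \<ge> 1 \<Longrightarrow> \<bar>x\<bar> \<le> X \<Longrightarrow> \<bar>R r x\<bar> \<le> A"
    and "\<And>r x. r \<ge> 1 \<Longrightarrow> \<bar>x\<bar> \<le> X \<Longrightarrow> \<bar>deriv (R r) x\<bar> \<le> A'"
proof -
  obtain C where C: "\<And>r y. r \<ge> 1 \<Longrightarrow> y \<in> {-\<bar>X\<bar>..\<bar>X\<bar>} \<Longrightarrow> \<bar>deriv (R r) y\<bar> \<le> C"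
    using R_bd by metis
  obtain K where K: "\<And>r. \<bar>R r 0\<bar> \<le> K"
    using convergent_imp_Bseq[of "\<lambda>r. R r 0"] tendsto_R[of 0]
    by (auto simp: convergent_def Bseq_def)
  have "\<bar>R r x\<bar> \<le> K + C * \<bar>X\<bar>" if r: "r \<ge> 1" and x: "\<bar>x\<bar> \<le> X" for r x
  proof -
    have "norm (R r x - R r 0) \<le> C * norm (x - 0)"
      using has_real_derivative_R[OF r] C[OF r] x
      by (intro field_differentiable_bound[where S="{-\<bar>X\<bar>..\<bar>X\<bar>}" and f'="deriv (R r)"])
         (auto intro: has_field_derivative_at_within)
    then have "\<bar>R r x - R r 0\<bar> \<le> C * \<bar>x\<bar>"
      by simp
    also have "\<dots> \<le> C * \<bar>X\<bar>"
      using C[OF r, of 0] x by (intro mult_left_mono) (auto intro: order_trans[OF abs_ge_zero])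
    finally show ?thesis
      using K[of r] by linarith
  qed
  moreover have "\<bar>deriv (R r) x\<bar> \<le> C" if "r \<ge> 1" "\<bar>x\<bar> \<le> X" for r x
    using C[OF that(1), of x] that(2) by (simp add: abs_le_iff)
  ultimately show ?thesis
    using that by blast
qed

end

locale relu_risk = smooth_relu_approximation R
  for R :: "nat \<Rightarrow> real \<Rightarrow> real" +
  fixes d H :: nat and a b :: real and f :: "(nat \<Rightarrow> real) \<Rightarrow> real" and \<mu> :: "(nat \<Rightarrow> real) measure"
  assumes f_cont: "continuous_on (cube d a b) f"
    and sets_\<mu>: "sets \<mu> = sets (leb_cube d a b)"
    and finite_\<mu>: "finite_measure \<mu>"
begin

lemma space_\<mu>: "space \<mu> = cube d a b"
  using sets_eq_imp_space_eq[OF sets_\<mu>] space_leb_cube by simp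

lemma borel_measurable_component_\<mu> [measurable]: "(\<lambda>y. y j) \<in> borel_measurable \<mu>"
  using borel_measurable_component_leb_cube measurable_cong_sets[OF sets_\<mu> refl] by blast

lemma borel_measurable_f [measurable]: "f \<in> borel_measurable \<mu>"
  using borel_measurable_continuous_on_cube[OF f_cont] measurable_cong_sets[OF sets_\<mu> refl] by blast

lemma borel_measurable_realization:
  assumes [measurable]: "\<rho> \<in> borel_measurable borel"
  shows "realization d H \<rho> \<phi> \<in> borel_measurable \<mu>"
  unfolding realization_def neuron_input_def by measurable

lemma borel_measurable_risk_gradient_integrand:
  assumes [measurable]: "\<rho> \<in> borel_measurable borel" "\<rho>' \<in> borel_measurable borel"
  shows "risk_gradient_integrand d H f \<rho> \<rho>' \<phi> k \<in> borel_measurable \<mu>"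
  unfolding risk_gradient_integrand_def realization_def realization_partial_def neuron_input_def
  by measurable

lemma abs_component_le: "y \<in> space \<mu> \<Longrightarrow> j \<in> {1..d} \<Longrightarrow> \<bar>y j\<bar> \<le> max \<bar>a\<bar> \<bar>b\<bar>"
  unfolding space_\<mu> by (rule abs_component_le_of_mem_cube)

lemma f_bounded:
  obtains F where "\<And>y. y \<in> space \<mu> \<Longrightarrow> \<bar>f y\<bar> \<le> F"
proof -
  have "bounded (f ` cube d a b)"
    by (intro compact_imp_bounded compact_continuous_image f_cont compact_cube)
  then show ?thesis
    using that unfolding space_\<mu> bounded_iff by fastforce
qed

lemma integrable_const_\<mu>: "integrable \<mu> (\<lambda>_. c :: real)"
  using finite_\<mu> finite_measure.integrable_const by blast

lemma integrable_squared_residual: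
  assumes r: "r \<ge> 1" and \<phi>: "\<And>m. \<bar>\<phi> m\<bar> \<le> P"
  shows "integrable \<mu> (\<lambda>y. (f y - realization d H (R r) \<phi> y)\<^sup>2)"
proof -
  define Y where "Y = max \<bar>a\<bar> \<bar>b\<bar>"
  obtain F where F: "\<And>y. y \<in> space \<mu> \<Longrightarrow> \<bar>f y\<bar> \<le> F"
    using f_bounded by blast
  obtain A where A: "\<And>x. \<bar>x\<bar> \<le> P + real d * (P * Y) \<Longrightarrow> \<bar>R r x\<bar> \<le> A"
    using R_uniformly_bounded r by metis
  define B where "B = F + (P + real H * (P * A))"
  have "\<bar>f y - realization d H (R r) \<phi> y\<bar> \<le> B" if "y \<in> space \<mu>" for y
  proof -
    have "\<bar>realization d H (R r) \<phi> y\<bar> \<le> P + real H * (P * A)"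
      using \<phi> abs_component_le[OF that, folded Y_def] A by (rule abs_realization_le)
    then show ?thesis
      using F[OF that] unfolding B_def by linarith
  qed
  then show ?thesis
    using borel_measurable_realization[OF borel_measurable_R[OF r]]
    by (intro finite_measure.integrable_const_bound[OF finite_\<mu>, where B="B\<^sup>2"] AE_I2)
       (auto simp: abs_le_square_iff[symmetric] intro: order_trans[OF _ abs_ge_self])
qed

lemma partial_risk_eq_integral:
  assumes r: "r \<ge> 1" and \<phi>: "\<And>m. \<bar>\<phi> m\<bar> \<le> P"
  shows "partial (risk d H f \<mu> (R r)) \<phi> k =
    (\<integral>y. risk_gradient_integrand d H f (R r) (deriv (R r)) \<phi> k y \<partial>\<mu>)"
proof -
  define Y where "Y = max \<bar>a\<bar> \<bar>b\<bar>"
  obtain F where F: "\<And>y. y \<in> space \<mu> \<Longrightarrow> \<bar>f y\<bar> \<le> F"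
    using f_bounded by blast
  obtain A A' where A: "\<And>x. \<bar>x\<bar> \<le> (P + 1) + real d * ((P + 1) * Y) \<Longrightarrow> \<bar>R r x\<bar> \<le> A"
    and A': "\<And>x. \<bar>x\<bar> \<le> (P + 1) + real d * ((P + 1) * Y) \<Longrightarrow> \<bar>deriv (R r) x\<bar> \<le> A'"
    using R_uniformly_bounded r by metis
  define \<phi>t where "\<phi>t t = \<phi>(k := \<phi> k + t)" for t
  have \<phi>t: "\<bar>\<phi>t t m\<bar> \<le> P + 1" if "t \<in> {-1..1}" for t m
    using \<phi>[of m] that by (auto simp: \<phi>t_def)
  have "((\<lambda>t. \<integral>y. (f y - realization d H (R r) (\<phi>t t) y)\<^sup>2 \<partial>\<mu>) has_real_derivative
      (\<integral>y. risk_gradient_integrand d H f (R r) (deriv (R r)) (\<phi>t 0) k y \<partial>\<mu>)) (at 0)"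
  proof (rule has_real_derivative_integral[OF _ _ _ _ integrable_const_\<mu>])
    fix t :: real assume t: "t \<in> {-1..1}"
    show "integrable \<mu> (\<lambda>y. (f y - realization d H (R r) (\<phi>t t) y)\<^sup>2)"
      using r \<phi>t[OF t] by (rule integrable_squared_residual)
    show "\<bar>risk_gradient_integrand d H f (R r) (deriv (R r)) (\<phi>t t) k y\<bar>
      \<le> 2 * ((P + 1) + real H * ((P + 1) * A) + F) * (1 + real H * (A + (P + 1) * A' * (1 + real d * Y)))"
      if "y \<in> space \<mu>" for y
      using \<phi>t[OF t] abs_component_le[OF that, folded Y_def] F[OF that] A A'
      by (rule abs_risk_gradient_integrand_le)
  next
    show "risk_gradient_integrand d H f (R r) (deriv (R r)) (\<phi>t 0) k \<in> borel_measurable \<mu>"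
      using borel_measurable_R[OF r] borel_measurable_deriv_R[OF r]
      by (rule borel_measurable_risk_gradient_integrand)
    show "((\<lambda>s. (f y - realization d H (R r) (\<phi>t s) y)\<^sup>2) has_real_derivative
        risk_gradient_integrand d H f (R r) (deriv (R r)) (\<phi>t t) k y) (at t)" for y t
      unfolding risk_gradient_integrand_def \<phi>t_def
      by (rule derivative_eq_intros has_real_derivative_realization has_real_derivative_R[OF r] refl
          | simp add: algebra_simps)+
  qed
  then show ?thesis
    unfolding partial_def risk_eq_integral_realization \<phi>t_def by (simp add: DERIV_imp_deriv)
qed

lemma tendsto_partial_risk:
  assumes \<phi>: "\<And>m. \<bar>\<phi> m\<bar> \<le> P"
  shows "(\<lambda>r. partial (risk d H f \<mu> (R r)) \<phi> k) \<longlonglongrightarrow> relu_gradient d H f \<mu> \<phi> k"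
proof -
  define Y where "Y = max \<bar>a\<bar> \<bar>b\<bar>"
  obtain F where F: "\<And>y. y \<in> space \<mu> \<Longrightarrow> \<bar>f y\<bar> \<le> F"
    using f_bounded by blast
  obtain A A' where A: "\<And>r x. r \<ge> 1 \<Longrightarrow> \<bar>x\<bar> \<le> P + real d * (P * Y) \<Longrightarrow> \<bar>R r x\<bar> \<le> A"
    and A': "\<And>r x. r \<ge> 1 \<Longrightarrow> \<bar>x\<bar> \<le> P + real d * (P * Y) \<Longrightarrow> \<bar>deriv (R r) x\<bar> \<le> A'"
    using R_uniformly_bounded by metis
  define W where "W = 2 * (P + real H * (P * A) + F) * (1 + real H * (A + P * A' * (1 + real d * Y)))"
  have "(\<lambda>r. \<integral>y. risk_gradient_integrand d H f (R r) (deriv (R r)) \<phi> k y \<partial>\<mu>) \<longlonglongrightarrow>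
      relu_gradient d H f \<mu> \<phi> k"
    unfolding relu_gradient_def
  proof (rule integral_dominated_convergence_eventually[OF _ integrable_const_\<mu>])
    show "risk_gradient_integrand d H f (\<lambda>x. max x 0) (indicator {0<..}) \<phi> k \<in> borel_measurable \<mu>"
      by (intro borel_measurable_risk_gradient_integrand) measurable
    show "AE y in \<mu>. (\<lambda>r. risk_gradient_integrand d H f (R r) (deriv (R r)) \<phi> k y) \<longlonglongrightarrow>
        risk_gradient_integrand d H f (\<lambda>x. max x 0) (indicator {0<..}) \<phi> k y"
      by (intro AE_I2 tendsto_risk_gradient_integrand_activation tendsto_R tendsto_deriv_R)
    show "\<forall>\<^sub>F r in sequentially.
        risk_gradient_integrand d H f (R r) (deriv (R r)) \<phi> k \<in> borel_measurable \<mu> \<and>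
        (AE y in \<mu>. \<bar>risk_gradient_integrand d H f (R r) (deriv (R r)) \<phi> k y\<bar> \<le> W)"
      using eventually_ge_at_top[of "1::nat"]
    proof eventually_elim
      case (elim r)
      have "\<bar>risk_gradient_integrand d H f (R r) (deriv (R r)) \<phi> k y\<bar> \<le> W"
        if "y \<in> space \<mu>" for y
        using \<phi> abs_component_le[OF that, folded Y_def] F[OF that] A[OF elim] A'[OF elim]
        unfolding W_def by (rule abs_risk_gradient_integrand_le)
      then show ?case
        using borel_measurable_R[OF elim] borel_measurable_deriv_R[OF elim]
        by (auto intro: AE_I2 borel_measurable_risk_gradient_integrand)
    qed
  qed
  moreover have "\<forall>\<^sub>F r in sequentially. partial (risk d H f \<mu> (R r)) \<phi> k =
      (\<integral>y. risk_gradient_integrand d H f (R r) (deriv (R r)) \<phi> k y \<partial>\<mu>)"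
    using eventually_ge_at_top[of "1::nat"] by eventually_elim (rule partial_risk_eq_integral[OF _ \<phi>])
  ultimately show ?thesis
    using Lim_transform_eventually tendsto_cong by fastforce
qed

lemma continuous_relu_gradient:
  assumes \<theta>: "\<theta> \<in> param_space dd"
    and nonzero: "AE y in \<mu>. \<forall>l\<in>{1..H}.
      neuron_input d H (indicator {k}) l y \<noteq> 0 \<longrightarrow> neuron_input d H \<theta> l y \<noteq> 0"
  shows "continuous (at \<theta> within param_space dd) (\<lambda>\<phi>. relu_gradient d H f \<mu> \<phi> k)"
proof (rule continuous_within_sequentiallyI)
  fix u assume u_in: "\<forall>n. u n \<in> param_space dd" and u: "u \<longlonglongrightarrow> \<theta>"
  have u_component: "(\<lambda>n. u n m) \<longlonglongrightarrow> \<theta> m" for m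
    using continuous_on_tendsto_compose[OF continuous_on_product_coordinates u] by simp
  obtain Pu where Pu: "\<And>n m. \<bar>u n m\<bar> \<le> Pu"
    using param_space_convergent_uniformly_bounded u_in u_component by metis
  define P where "P = max Pu (\<Sum>m\<in>{1..dd}. \<bar>\<theta> m\<bar>)"
  have P: "\<bar>u n m\<bar> \<le> P" "\<bar>\<theta> m\<bar> \<le> P" for n m
    using Pu[of n m] abs_le_sum_of_mem_param_space[OF \<theta>, of m] by (auto simp: P_def)
  define Y where "Y = max \<bar>a\<bar> \<bar>b\<bar>"
  obtain F where F: "\<And>y. y \<in> space \<mu> \<Longrightarrow> \<bar>f y\<bar> \<le> F"
    using f_bounded by blast
  have relu_bounds: "\<bar>max x 0\<bar> \<le> P + real d * (P * Y)" "\<bar>indicator {0<..} x :: real\<bar> \<le> 1"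
    if "\<bar>x\<bar> \<le> P + real d * (P * Y)" for x :: real
    using that by (auto simp: indicator_def)
  define W where "W = 2 * (P + real H * (P * (P + real d * (P * Y))) + F)
    * (1 + real H * ((P + real d * (P * Y)) + P * 1 * (1 + real d * Y)))"
  show "(\<lambda>n. relu_gradient d H f \<mu> (u n) k) \<longlonglongrightarrow> relu_gradient d H f \<mu> \<theta> k"
    unfolding relu_gradient_def
  proof (rule integral_dominated_convergence[OF _ _ integrable_const_\<mu>])
    show "AE y in \<mu>. (\<lambda>n. risk_gradient_integrand d H f (\<lambda>x. max x 0) (indicator {0<..}) (u n) k y)
        \<longlonglongrightarrow> risk_gradient_integrand d H f (\<lambda>x. max x 0) (indicator {0<..}) \<theta> k y"
      using nonzero by eventually_elim (rule tendsto_risk_gradient_integrand_relu[OF u_component])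
    have "\<bar>risk_gradient_integrand d H f (\<lambda>x. max x 0) (indicator {0<..}) (u n) k y\<bar> \<le> W"
      if y: "y \<in> space \<mu>" for n y
      unfolding W_def using P(1) abs_component_le[OF y, folded Y_def] F[OF y] relu_bounds
      by (rule abs_risk_gradient_integrand_le)
    then show "AE y in \<mu>. norm (risk_gradient_integrand d H f (\<lambda>x. max x 0) (indicator {0<..}) (u n) k y) \<le> W"
      for n
      by (intro AE_I2) simp
  qed (intro borel_measurable_risk_gradient_integrand; measurable)+
qed

lemma continuous_relu_gradient_nondegenerate_neuron:
  assumes "\<theta> \<in> param_space dd" and "absolutely_continuous (leb_cube d a b) \<mu>"
    and "\<bar>bias d H \<theta> i\<bar> + (\<Sum>j=1..d. \<bar>wgt d \<theta> i j\<bar>) > 0"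
    and only_i: "\<And>l y. l \<in> {1..H} \<Longrightarrow> l \<noteq> i \<Longrightarrow> neuron_input d H (indicator {k}) l y = 0"
  shows "continuous (at \<theta> within param_space dd) (\<lambda>\<phi>. relu_gradient d H f \<mu> \<phi> k)"
proof (rule continuous_relu_gradient[OF assms(1)])
  show "AE y in \<mu>. \<forall>l\<in>{1..H}.
      neuron_input d H (indicator {k}) l y \<noteq> 0 \<longrightarrow> neuron_input d H \<theta> l y \<noteq> 0"
    using AE_neuron_input_nonzero[OF sets_\<mu> assms(2,3)] by eventually_elim (metis only_i)
qed

end

theorem lemma2p13:
  fixes d H dd :: nat and a b :: real
    and f :: "(nat \<Rightarrow> real) \<Rightarrow> real"
    and R :: "nat \<Rightarrow> real \<Rightarrow> real"
    and \<mu> :: "(nat \<Rightarrow> real) measure"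
    and G :: "(nat \<Rightarrow> real) \<Rightarrow> nat \<Rightarrow> real"
    and \<theta> :: "nat \<Rightarrow> real" and i :: nat
  assumes d_pos: "d \<ge> 1" and H_pos: "H \<ge> 1"
    and dd_def: "dd = d * H + 2 * H + 1"
    and ab: "a < b"
    and f_cont: "continuous_on (cube d a b) f"
    and R_C1: "\<forall>r\<ge>1. (\<forall>x. R r differentiable at x) \<and> continuous_on UNIV (deriv (R r))"
    and R_lim: "\<forall>x. (\<lambda>r. \<bar>R r x - max x 0\<bar> + \<bar>deriv (R r) x - indicator {0<..} x\<bar>)
                      \<longlonglongrightarrow> 0"
    and R_bd: "\<forall>x. \<exists>C. \<forall>r\<ge>1. \<forall>y\<in>{-\<bar>x\<bar>..\<bar>x\<bar>}. \<bar>deriv (R r) y\<bar> \<le> C"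
    and mu_sets: "sets \<mu> = sets (leb_cube d a b)"
    and mu_fin: "finite_measure \<mu>"
    and mu_ac: "absolutely_continuous (leb_cube d a b) \<mu>"
    and G_def: "\<forall>\<phi>\<in>param_space dd.
        (\<forall>k\<in>{1..dd}. convergent (\<lambda>r. partial (risk d H f \<mu> (R r)) \<phi> k)) \<longrightarrow>
        (\<forall>k\<in>{1..dd}. G \<phi> k = lim (\<lambda>r. partial (risk d H f \<mu> (R r)) \<phi> k))"
    and \<theta>_in: "\<theta> \<in> param_space dd"
    and i_in: "i \<in> {1..H}"
    and nondeg: "\<bar>bias d H \<theta> i\<bar> + (\<Sum>j=1..d. \<bar>wgt d \<theta> i j\<bar>) > 0"
  shows "(\<forall>j\<in>{1..d}. continuous (at \<theta> within param_space dd) (\<lambda>\<phi>. G \<phi> ((i - 1) * d + j)))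
       \<and> continuous (at \<theta> within param_space dd) (\<lambda>\<phi>. G \<phi> (H * d + i))"
proof -
  interpret relu_risk R d H a b f \<mu>
    by (intro relu_risk.intro smooth_relu_approximation.intro relu_risk_axioms.intro
        R_C1 R_lim R_bd f_cont mu_sets mu_fin)
  have G_eq: "G \<phi> k = relu_gradient d H f \<mu> \<phi> k" if "\<phi> \<in> param_space dd" "k \<in> {1..dd}" for \<phi> k
  proof -
    have "(\<lambda>r. partial (risk d H f \<mu> (R r)) \<phi> k') \<longlonglongrightarrow> relu_gradient d H f \<mu> \<phi> k'" for k'
      using abs_le_sum_of_mem_param_space[OF that(1)] by (rule tendsto_partial_risk)
    then show ?thesis
      using G_def that by (metis convergent_def limI)
  qed
  have continuous_G: "continuous (at \<theta> within param_space dd) (\<lambda>\<phi>. G \<phi> k)"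
    if k: "k \<in> {1..dd}"
      and only_i: "\<And>l y. l \<in> {1..H} \<Longrightarrow> l \<noteq> i \<Longrightarrow> neuron_input d H (indicator {k}) l y = 0" for k
  proof (rule continuous_transform_within[OF _ zero_less_one \<theta>_in])
    show "continuous (at \<theta> within param_space dd) (\<lambda>\<phi>. relu_gradient d H f \<mu> \<phi> k)"
      using \<theta>_in mu_ac nondeg only_i by (rule continuous_relu_gradient_nondegenerate_neuron)
    show "relu_gradient d H f \<mu> \<phi> k = G \<phi> k" if "\<phi> \<in> param_space dd" for \<phi>
      using G_eq[OF that k] by simp
  qed
  show ?thesis
  proof (intro conjI ballI continuous_G)
    fix j assume j: "j \<in> {1..d}"
    show "(i - 1) * d + j \<in> {1..dd}"
      using weight_index_mem[OF i_in j] unfolding dd_def .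
    show "neuron_input d H (indicator {(i - 1) * d + j}) l y = 0" if "l \<in> {1..H}" "l \<noteq> i" for l y
      using i_in that j by (rule neuron_input_indicator_weight_other)
  next
    show "H * d + i \<in> {1..dd}"
      using bias_index_mem[OF i_in] unfolding dd_def .
    show "neuron_input d H (indicator {H * d + i}) l y = 0" if "l \<in> {1..H}" "l \<noteq> i" for l y
      using that i_in by (intro neuron_input_indicator_bias_other) auto
  qed
qed

end
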